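(* Let $r\ge 2$ be an integer and let $G$ be a connected $r$-regular graph of order $n$. (i) If $G$ is not a Moore graph of degree $r$ and diameter $2$, then $$\gamma_{\times r}(G)\le \frac{r^2-1}{r^2}\,n .$$ (ii) If $G$ is a Moore graph of degree $r$ and diameter $2$ (so $n=r^2+1$), then $$\gamma_{\times r}(G)=\frac{r^2}{r^2+1}\,n=r^2 .$$
   Context: All graphs are finite and simple. For a vertex $v$, $N[v]=\{v\}\cup\{u\in V(G): uv\in E(G)\}$ is its closed neighborhood. For a positive integer $k$, a $k$-tuple dominating set of $G$ is a set $S\subseteq V(G)$ with $|N[v]\cap S|\ge k$ for every $v\in V(G)$; $\gamma_{\times k}(G)$ denotes the minimum cardinality of such a set. A Moore graph of degree $r$ and diameter $2$ is an $r$-regular graph of diameter $2$ with exactly $1+r+r(r-1)=r^2+1$ vertices. *)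

theory Defs
  imports Complex_Main
begin

definition simple_graph :: "'a set \<Rightarrow> ('a \<Rightarrow> 'a \<Rightarrow> bool) \<Rightarrow> bool" where
  "simple_graph V E \<longleftrightarrow> finite V \<and> (\<forall>u v. E u v \<longrightarrow> u \<in> V \<and> v \<in> V)
     \<and> (\<forall>u v. E u v \<longrightarrow> E v u) \<and> (\<forall>v. \<not> E v v)"

definition closed_nbhd :: "'a set \<Rightarrow> ('a \<Rightarrow> 'a \<Rightarrow> bool) \<Rightarrow> 'a \<Rightarrow> 'a set" where
  "closed_nbhd V E v = {v} \<union> {u \<in> V. E u v}"

definition degree :: "'a set \<Rightarrow> ('a \<Rightarrow> 'a \<Rightarrow> bool) \<Rightarrow> 'a \<Rightarrow> nat" where
  "degree V E v = card {u \<in> V. E u v}"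

definition regular :: "'a set \<Rightarrow> ('a \<Rightarrow> 'a \<Rightarrow> bool) \<Rightarrow> nat \<Rightarrow> bool" where
  "regular V E r \<longleftrightarrow> (\<forall>v\<in>V. degree V E v = r)"

definition connected :: "'a set \<Rightarrow> ('a \<Rightarrow> 'a \<Rightarrow> bool) \<Rightarrow> bool" where
  "connected V E \<longleftrightarrow> V \<noteq> {} \<and> (\<forall>u\<in>V. \<forall>v\<in>V. E\<^sup>*\<^sup>* u v)"

fun dist_le :: "('a \<Rightarrow> 'a \<Rightarrow> bool) \<Rightarrow> nat \<Rightarrow> 'a \<Rightarrow> 'a \<Rightarrow> bool" where
  "dist_le E 0 u v \<longleftrightarrow> u = v"
| "dist_le E (Suc d) u v \<longleftrightarrow> dist_le E d u v \<or> (\<exists>w. dist_le E d u w \<and> E w v)"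

definition has_diameter :: "'a set \<Rightarrow> ('a \<Rightarrow> 'a \<Rightarrow> bool) \<Rightarrow> nat \<Rightarrow> bool" where
  "has_diameter V E d \<longleftrightarrow> (\<forall>u\<in>V. \<forall>v\<in>V. dist_le E d u v)
     \<and> (d > 0 \<longrightarrow> (\<exists>u\<in>V. \<exists>v\<in>V. \<not> dist_le E (d - 1) u v))"

definition moore_graph_deg_diam2 :: "'a set \<Rightarrow> ('a \<Rightarrow> 'a \<Rightarrow> bool) \<Rightarrow> nat \<Rightarrow> bool" where
  "moore_graph_deg_diam2 V E r \<longleftrightarrow> regular V E r \<and> has_diameter V E 2 \<and> card V = r^2 + 1"

definition k_tuple_dominating :: "'a set \<Rightarrow> ('a \<Rightarrow> 'a \<Rightarrow> bool) \<Rightarrow> nat \<Rightarrow> 'a set \<Rightarrow> bool" where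
  "k_tuple_dominating V E k S \<longleftrightarrow> S \<subseteq> V \<and> (\<forall>v\<in>V. card (closed_nbhd V E v \<inter> S) \<ge> k)"

definition k_tuple_domination_number :: "'a set \<Rightarrow> ('a \<Rightarrow> 'a \<Rightarrow> bool) \<Rightarrow> nat \<Rightarrow> nat" where
  "k_tuple_domination_number V E k = Min {card S | S. k_tuple_dominating V E k S}"

end

theory Submission
  imports Defs
begin

text \<open>If the closed neighbourhoods of the vertices of T are pairwise disjoint, each closed
  neighbourhood (of size r + 1) meets T at most once, so V - T is r-tuple dominating. Such a
  packing is grown greedily, always adding a vertex x adjacent to the region within distance 2 of
  the current packing; the radius-2 ball of x has at most r^2 + 1 vertices and shares at least two
  of them with that region, so a maximal packing T has n \<le> (r^2 - 1) |T| + 2 \<le> r^2 |T| as soon as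
  |T| \<ge> 2. Otherwise every radius-2 ball is the whole graph, so the diameter is at most 2 and
  n \<le> r^2 + 1, with equality exactly for Moore graphs. In a Moore graph any two vertices lie in a
  common closed neighbourhood, hence an r-tuple dominating set misses at most one vertex.\<close>

definition ball2 :: "'a set \<Rightarrow> ('a \<Rightarrow> 'a \<Rightarrow> bool) \<Rightarrow> 'a \<Rightarrow> 'a set" where
  "ball2 V E x = (\<Union>w\<in>closed_nbhd V E x. closed_nbhd V E w)"

definition packing :: "'a set \<Rightarrow> ('a \<Rightarrow> 'a \<Rightarrow> bool) \<Rightarrow> 'a set \<Rightarrow> bool" where
  "packing V E T \<longleftrightarrow> T \<subseteq> V \<and>
     (\<forall>t1\<in>T. \<forall>t2\<in>T. t1 \<noteq> t2 \<longrightarrow> closed_nbhd V E t1 \<inter> closed_nbhd V E t2 = {})"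

lemma finite_k_tuple_dominating_cards:
  assumes "finite V"
  shows "finite {card S |S. k_tuple_dominating V E k S}"
proof (rule finite_subset)
  show "{card S |S. k_tuple_dominating V E k S} \<subseteq> card ` Pow V"
    by (auto simp: k_tuple_dominating_def)
qed (use assms in simp)

lemma k_tuple_domination_number_le:
  assumes "finite V" "k_tuple_dominating V E k S"
  shows "k_tuple_domination_number V E k \<le> card S"
  unfolding k_tuple_domination_number_def
  using finite_k_tuple_dominating_cards[OF assms(1)] assms(2) by (auto intro: Min_le)

lemma k_tuple_domination_number_attained:
  assumes "finite V" "k_tuple_dominating V E k S"
  obtains S' where "k_tuple_dominating V E k S'" "k_tuple_domination_number V E k = card S'"
proof -
  have "k_tuple_domination_number V E k \<in> {card S |S. k_tuple_dominating V E k S}"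
    unfolding k_tuple_domination_number_def
    using finite_k_tuple_dominating_cards[OF assms(1)] assms(2) by (intro Min_in) auto
  then show ?thesis using that by blast
qed

lemma rtranclp_leaves_set:
  "R\<^sup>*\<^sup>* a b \<Longrightarrow> a \<in> A \<Longrightarrow> b \<notin> A \<Longrightarrow> \<exists>y z. y \<in> A \<and> z \<notin> A \<and> R y z"
  by (induction rule: rtranclp_induct) blast+

lemma real_le_fraction_mult:
  fixes g t n q :: nat
  assumes "g + t \<le> n" "n \<le> q * t" "0 < q"
  shows "real g \<le> (real q - 1) / real q * real n"
proof -
  have "real n / real q \<le> real t"
    using assms(2,3) by (simp add: divide_le_eq mult.commute flip: of_nat_mult)
  moreover have "(real q - 1) / real q * real n = real n - real n / real q"
    using assms(3) by (simp add: field_simps)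
  ultimately show ?thesis using assms(1) by linarith
qed

lemma mem_closed_nbhd_self: "v \<in> closed_nbhd V E v"
  by (simp add: closed_nbhd_def)

locale regular_graph =
  fixes V :: "'a set" and E :: "'a \<Rightarrow> 'a \<Rightarrow> bool" and r :: nat
  assumes simple: "simple_graph V E" and regular: "regular V E r"
begin

lemma finite_vertices: "finite V"
  using simple by (simp add: simple_graph_def)

lemma adj_sym: "E u v \<Longrightarrow> E v u"
  using simple by (simp add: simple_graph_def)

lemma adj_vertices: "E u v \<Longrightarrow> u \<in> V \<and> v \<in> V"
  using simple by (simp add: simple_graph_def)

lemma adj_irrefl: "\<not> E v v"
  using simple by (simp add: simple_graph_def)

lemma closed_nbhd_subset: "v \<in> V \<Longrightarrow> closed_nbhd V E v \<subseteq> V"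
  by (auto simp: closed_nbhd_def)

lemma finite_closed_nbhd: "v \<in> V \<Longrightarrow> finite (closed_nbhd V E v)"
  using closed_nbhd_subset finite_subset finite_vertices by blast

lemma mem_closed_nbhd_commute:
  "u \<in> V \<Longrightarrow> v \<in> V \<Longrightarrow> u \<in> closed_nbhd V E v \<longleftrightarrow> v \<in> closed_nbhd V E u"
  by (auto simp: closed_nbhd_def intro: adj_sym)

lemma card_closed_nbhd: "v \<in> V \<Longrightarrow> card (closed_nbhd V E v) = r + 1"
proof -
  assume v: "v \<in> V"
  have "closed_nbhd V E v = insert v {u \<in> V. E u v}" "v \<notin> {u \<in> V. E u v}"
    by (auto simp: closed_nbhd_def adj_irrefl)
  moreover have "card {u \<in> V. E u v} = r"
    using regular v by (simp add: regular_def degree_def)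
  ultimately show ?thesis using finite_vertices by simp
qed

lemma ball2_subset: "v \<in> V \<Longrightarrow> ball2 V E v \<subseteq> V"
  by (auto simp: ball2_def closed_nbhd_def)

lemma mem_ball2_iff:
  assumes "x \<in> V" "t \<in> V"
  shows "x \<in> ball2 V E t \<longleftrightarrow> closed_nbhd V E x \<inter> closed_nbhd V E t \<noteq> {}"
  using assms closed_nbhd_subset mem_closed_nbhd_commute by (fastforce simp: ball2_def)

lemma dist_le_2_iff_ball2:
  assumes "u \<in> V" "v \<in> V"
  shows "dist_le E 2 u v \<longleftrightarrow> u \<in> ball2 V E v"
  using assms by (auto simp: numeral_2_eq_2 ball2_def closed_nbhd_def dest: adj_sym adj_vertices)

lemma card_ball2_le:
  assumes x: "x \<in> V"
  shows "card (ball2 V E x) \<le> r^2 + 1"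
proof -
  define A where "A w = {u \<in> V. E u w}" for w
  have card_A: "w \<in> V \<Longrightarrow> card (A w) = r" for w
    using regular by (simp add: regular_def degree_def A_def)
  have finite_A: "finite (A w)" for w
    using finite_vertices by (simp add: A_def)
  have "ball2 V E x \<subseteq> closed_nbhd V E x \<union> (\<Union>w\<in>A x. A w - {x})"
    by (auto simp: ball2_def closed_nbhd_def A_def)
  moreover have "finite (closed_nbhd V E x \<union> (\<Union>w\<in>A x. A w - {x}))"
    by (simp add: finite_closed_nbhd[OF x] finite_A)
  ultimately have "card (ball2 V E x) \<le> card (closed_nbhd V E x \<union> (\<Union>w\<in>A x. A w - {x}))"
    by (simp add: card_mono)
  also have "\<dots> \<le> card (closed_nbhd V E x) + card (\<Union>w\<in>A x. A w - {x})"
    by (rule card_Un_le)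
  also have "card (\<Union>w\<in>A x. A w - {x}) \<le> (\<Sum>w\<in>A x. card (A w - {x}))"
    by (rule card_UN_le[OF finite_A])
  also have "\<dots> = (\<Sum>w\<in>A x. r - 1)"
  proof (rule sum.cong)
    fix w assume "w \<in> A x"
    then have "w \<in> V" "x \<in> A w" using x by (auto simp: A_def adj_sym)
    then show "card (A w - {x}) = r - 1" using card_A by simp
  qed simp
  finally show ?thesis
    using card_closed_nbhd[OF x] card_A[OF x] by (cases r) (simp_all add: power2_eq_square)
qed

lemma packing_complement_k_tuple_dominating:
  assumes "packing V E T"
  shows "k_tuple_dominating V E r (V - T)"
  unfolding k_tuple_dominating_def
proof (intro conjI ballI)
  fix w assume w: "w \<in> V"
  let ?N = "closed_nbhd V E w"
  have "card (?N \<inter> T) \<le> 1"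
  proof -
    have "a = b" if "a \<in> ?N \<inter> T" "b \<in> ?N \<inter> T" for a b
    proof -
      have "w \<in> closed_nbhd V E a \<inter> closed_nbhd V E b"
        using that w assms mem_closed_nbhd_commute by (auto simp: packing_def)
      then show "a = b" using that assms by (auto simp: packing_def)
    qed
    then show ?thesis using finite_closed_nbhd[OF w] by (simp add: card_le_Suc0_iff_eq)
  qed
  moreover have "card ?N = card (?N \<inter> T) + card (?N \<inter> (V - T))"
    using card_Int_Diff[OF finite_closed_nbhd[OF w], of T] closed_nbhd_subset[OF w]
    by (metis Int_Diff inf.absorb_iff1)
  ultimately show "r \<le> card (?N \<inter> (V - T))" using card_closed_nbhd[OF w] by simp
qed auto

lemma k_tuple_domination_number_le_packing:
  assumes "packing V E T"
  shows "k_tuple_domination_number V E r + card T \<le> card V"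
proof -
  have "T \<subseteq> V" using assms by (simp add: packing_def)
  then have "card (V - T) + card T = card V"
    using finite_vertices by (metis card_Diff_subset card_mono finite_subset le_add_diff_inverse2)
  then show ?thesis
    using k_tuple_domination_number_le[OF finite_vertices
        packing_complement_k_tuple_dominating[OF assms]] by linarith
qed

lemma packing_insert:
  assumes "packing V E T" "x \<in> V" "x \<notin> (\<Union>t\<in>T. ball2 V E t)"
  shows "packing V E (insert x T)"
proof -
  have "closed_nbhd V E x \<inter> closed_nbhd V E t = {}" if "t \<in> T" for t
    using assms that mem_ball2_iff[of x t] by (auto simp: packing_def)
  then show ?thesis using assms(1,2) by (auto simp: packing_def)
qed

text \<open>Choosing x adjacent to the covered region guarantees that at least two vertices of its
  radius-2 ball are already covered.\<close>
lemma packing_extend: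
  assumes "connected V E" "packing V E T" "T \<noteq> {}" "(\<Union>t\<in>T. ball2 V E t) \<noteq> V"
  obtains x where "x \<notin> T" "packing V E (insert x T)"
    "card (\<Union>t\<in>insert x T. ball2 V E t) \<le> card (\<Union>t\<in>T. ball2 V E t) + (r^2 - 1)"
proof -
  let ?R = "\<Union>t\<in>T. ball2 V E t"
  have TV: "T \<subseteq> V" using assms(2) by (simp add: packing_def)
  then have "?R \<subseteq> V" using ball2_subset by blast
  then obtain x0 where x0: "x0 \<in> V" "x0 \<notin> ?R" using assms(4) by blast
  obtain v where v: "v \<in> T" using assms(3) by blast
  then have "v \<in> ?R" by (auto simp: ball2_def intro: mem_closed_nbhd_self)
  moreover have "E\<^sup>*\<^sup>* v x0" using assms(1) x0(1) v TV by (auto simp: connected_def)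
  ultimately obtain y x where yx: "y \<in> ?R" "x \<notin> ?R" "E y x"
    using rtranclp_leaves_set[of E v x0 ?R] x0(2) by meson
  then have x: "x \<in> V" and y: "y \<in> V" and x_nbhd: "x \<in> closed_nbhd V E y"
    by (auto simp: closed_nbhd_def dest: adj_vertices adj_sym)
  obtain t b where t: "t \<in> T" "b \<in> closed_nbhd V E t" "y \<in> closed_nbhd V E b"
    using yx(1) by (auto simp: ball2_def)
  have b: "b \<in> V" using t TV closed_nbhd_subset by blast
  have "y \<notin> closed_nbhd V E t"
    using yx(2) t(1) x_nbhd by (auto simp: ball2_def)
  then have "card {y, b} = 2" using t(2) by (cases "y = b") auto
  have yb: "{y, b} \<subseteq> ball2 V E x"
    using yx(3) t(3) x y b mem_closed_nbhd_commute
    by (auto simp: ball2_def closed_nbhd_def intro: mem_closed_nbhd_self)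
  have "b \<in> ?R" using t(1,2) by (auto simp: ball2_def intro: mem_closed_nbhd_self)
  then have "ball2 V E x - ?R \<subseteq> ball2 V E x - {y, b}" using yx(1) by blast
  then have "card (ball2 V E x - ?R) \<le> card (ball2 V E x - {y, b})"
    using finite_subset[OF ball2_subset[OF x] finite_vertices] by (simp add: card_mono)
  also have "\<dots> = card (ball2 V E x) - 2"
    using yb \<open>card {y, b} = 2\<close> by (simp add: card_Diff_subset)
  also have "\<dots> \<le> r^2 - 1" using card_ball2_le[OF x] by linarith
  finally have new: "card (ball2 V E x - ?R) \<le> r^2 - 1" .
  have "card (\<Union>t\<in>insert x T. ball2 V E t) = card ((ball2 V E x - ?R) \<union> ?R)" by simp
  also have "\<dots> \<le> card (ball2 V E x - ?R) + card ?R" by (rule card_Un_le)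
  finally have "card (\<Union>t\<in>insert x T. ball2 V E t) \<le> card ?R + (r^2 - 1)" using new by linarith
  moreover have "x \<notin> T" using yx(2) by (auto simp: ball2_def intro: mem_closed_nbhd_self)
  ultimately show ?thesis using that packing_insert assms(2) x yx(2) by blast
qed

lemma covering_packing_exists:
  assumes "connected V E" "v \<in> V"
  obtains T where "packing V E T" "v \<in> T" "(\<Union>t\<in>T. ball2 V E t) = V"
    "card V \<le> (r^2 - 1) * card T + 2"
proof -
  define P where "P T \<longleftrightarrow> packing V E T \<and> v \<in> T \<and>
    card (\<Union>t\<in>T. ball2 V E t) \<le> (r^2 - 1) * card T + 2" for T
  have "P {v}"
    using assms(2) card_ball2_le[OF assms(2)] by (simp add: P_def packing_def)
  moreover have "card T < Suc (card V)" if "P T" for T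
    using that finite_vertices by (simp add: P_def packing_def card_mono less_Suc_eq_le)
  ultimately obtain T where T: "P T" and T_max: "\<And>T'. P T' \<Longrightarrow> card T' \<le> card T"
    using Lattices_Big.ex_has_greatest_nat[of P "{v}" card] by blast
  have finite_T: "finite T"
    using T finite_vertices by (auto simp: P_def packing_def intro: finite_subset)
  have covering: "(\<Union>t\<in>T. ball2 V E t) = V"
  proof (rule ccontr)
    assume "(\<Union>t\<in>T. ball2 V E t) \<noteq> V"
    moreover have "packing V E T" "T \<noteq> {}" using T by (auto simp: P_def)
    ultimately obtain x where x: "x \<notin> T" "packing V E (insert x T)"
      "card (\<Union>t\<in>insert x T. ball2 V E t) \<le> card (\<Union>t\<in>T. ball2 V E t) + (r^2 - 1)"
      using packing_extend[OF assms(1)] by blast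
    have card_insert: "card (insert x T) = card T + 1" using x(1) finite_T by simp
    have "card (\<Union>t\<in>T. ball2 V E t) \<le> (r^2 - 1) * card T + 2" using T unfolding P_def by blast
    then have "card (\<Union>t\<in>insert x T. ball2 V E t) \<le> (r^2 - 1) * card (insert x T) + 2"
      using x(3) unfolding card_insert distrib_left mult_1_right by linarith
    then have "P (insert x T)" using x(2) T unfolding P_def by blast
    then show False using T_max card_insert by fastforce
  qed
  show ?thesis by (rule that) (use T covering in \<open>auto simp: P_def\<close>)
qed

lemma large_packing_if_not_moore:
  assumes "connected V E" "r \<ge> 2" "\<not> moore_graph_deg_diam2 V E r"
  obtains T where "packing V E T" "card V \<le> r^2 * card T"
proof (cases "\<exists>v\<in>V. ball2 V E v \<noteq> V")
  case True
  then obtain v where v: "v \<in> V" "ball2 V E v \<noteq> V" by blast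
  obtain T where T: "packing V E T" "v \<in> T" "(\<Union>t\<in>T. ball2 V E t) = V"
    "card V \<le> (r^2 - 1) * card T + 2"
    using covering_packing_exists[OF assms(1) v(1)] by blast
  have "T \<noteq> {v}" using T(3) v(2) by auto
  then obtain u where "u \<in> T" "u \<noteq> v" using T(2) by blast
  moreover have "finite T"
    using T(1) finite_vertices by (auto simp: packing_def intro: finite_subset)
  ultimately have "card {u, v} \<le> card T" using T(2) by (intro card_mono) auto
  then have "2 \<le> card T" using \<open>u \<noteq> v\<close> by simp
  moreover have "1 \<le> r^2" using assms(2) by simp
  ultimately have "(r^2 - 1) * card T + 2 \<le> r^2 * card T"
    by (cases "r^2") simp_all
  then have "card V \<le> r^2 * card T" using T(4) by linarith
  with T(1) show ?thesis by (rule that)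
next
  case False
  obtain v where v: "v \<in> V" using assms(1) by (auto simp: connected_def)
  have "card V \<le> r^2 + 1" using False card_ball2_le[OF v] v by simp
  moreover have "card V \<noteq> r^2 + 1"
  proof
    assume n: "card V = r^2 + 1"
    have "r * 2 \<le> r * r" using assms(2) by (intro mult_le_mono2)
    then have "card (closed_nbhd V E v) < card V"
      using n card_closed_nbhd[OF v] assms(2) by (simp add: power2_eq_square)
    then have "\<not> V \<subseteq> closed_nbhd V E v"
      using card_mono[OF finite_closed_nbhd[OF v]] by (meson not_le)
    then obtain u where u: "u \<in> V" "u \<notin> closed_nbhd V E v" by blast
    then have "\<not> dist_le E (2 - 1) u v" by (auto simp: closed_nbhd_def)
    moreover have "\<forall>u\<in>V. \<forall>w\<in>V. dist_le E 2 u w"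
      using False by (auto simp: dist_le_2_iff_ball2)
    ultimately have "has_diameter V E 2" using u(1) v by (auto simp: has_diameter_def)
    then show False using assms(3) regular n by (simp add: moore_graph_deg_diam2_def)
  qed
  ultimately have "card V \<le> r^2 * card {v}" by simp
  moreover have "packing V E {v}" using v by (simp add: packing_def)
  ultimately show ?thesis using that by blast
qed

lemma card_Diff_k_tuple_dominating_le_1:
  assumes "\<forall>u\<in>V. \<forall>v\<in>V. dist_le E 2 u v" "r \<ge> 1" "k_tuple_dominating V E r S"
  shows "card (V - S) \<le> 1"
proof -
  have "a = b" if ab: "a \<in> V - S" "b \<in> V - S" for a b
  proof (rule ccontr)
    assume "a \<noteq> b"
    have "dist_le E 2 a b" using assms(1) ab by blast
    then have "closed_nbhd V E a \<inter> closed_nbhd V E b \<noteq> {}"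
      using ab by (simp add: dist_le_2_iff_ball2 mem_ball2_iff)
    then obtain z where z: "z \<in> closed_nbhd V E a" "z \<in> closed_nbhd V E b" by blast
    then have "z \<in> V" using ab closed_nbhd_subset by blast
    then have "{a, b} \<subseteq> closed_nbhd V E z"
      using z ab mem_closed_nbhd_commute by blast
    then have "card (closed_nbhd V E z - {a, b}) = r - 1"
      using card_closed_nbhd[OF \<open>z \<in> V\<close>] \<open>a \<noteq> b\<close> finite_closed_nbhd[OF \<open>z \<in> V\<close>]
      by (simp add: card_Diff_subset)
    moreover have "closed_nbhd V E z \<inter> S \<subseteq> closed_nbhd V E z - {a, b}" using ab by blast
    then have "card (closed_nbhd V E z \<inter> S) \<le> card (closed_nbhd V E z - {a, b})"
      using finite_closed_nbhd[OF \<open>z \<in> V\<close>] by (simp add: card_mono)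
    moreover have "r \<le> card (closed_nbhd V E z \<inter> S)"
      using assms(3) \<open>z \<in> V\<close> by (simp add: k_tuple_dominating_def)
    ultimately show False using assms(2) by linarith
  qed
  then show ?thesis using finite_vertices by (simp add: card_le_Suc0_iff_eq)
qed

lemma k_tuple_domination_number_moore:
  assumes "moore_graph_deg_diam2 V E r" "r \<ge> 1"
  shows "k_tuple_domination_number V E r = r^2"
proof -
  have n: "card V = r^2 + 1" and diam: "\<forall>u\<in>V. \<forall>v\<in>V. dist_le E 2 u v"
    using assms(1) by (auto simp: moore_graph_deg_diam2_def has_diameter_def)
  then obtain v where "v \<in> V" by fastforce
  then have "packing V E {v}" by (simp add: packing_def)
  then have upper: "k_tuple_domination_number V E r \<le> r^2"
    using k_tuple_domination_number_le_packing n by fastforce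
  obtain S where S: "k_tuple_dominating V E r S" "k_tuple_domination_number V E r = card S"
    using k_tuple_domination_number_attained[OF finite_vertices
        packing_complement_k_tuple_dominating[OF \<open>packing V E {v}\<close>]] by blast
  have "card V = card S + card (V - S)"
    using card_Int_Diff[OF finite_vertices, of S] S(1)
    by (simp add: k_tuple_dominating_def Int_absorb1)
  then show ?thesis
    using upper S n card_Diff_k_tuple_dominating_le_1[OF diam assms(2) S(1)] by linarith
qed

end

theorem theorem5:
  fixes V :: "'a set" and E :: "'a \<Rightarrow> 'a \<Rightarrow> bool" and r :: nat
  assumes "simple_graph V E" and "connected V E" and "regular V E r" and "r \<ge> 2"
  shows "(\<not> moore_graph_deg_diam2 V E r \<longrightarrow>
            real (k_tuple_domination_number V E r) \<le> (real r ^ 2 - 1) / real r ^ 2 * real (card V))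
       \<and> (moore_graph_deg_diam2 V E r \<longrightarrow>
            real (k_tuple_domination_number V E r) = real r ^ 2 / (real r ^ 2 + 1) * real (card V)
          \<and> k_tuple_domination_number V E r = r ^ 2)"
proof (intro conjI impI)
  interpret regular_graph V E r using assms(1,3) by unfold_locales
  show "real (k_tuple_domination_number V E r) \<le> (real r ^ 2 - 1) / real r ^ 2 * real (card V)"
    if not_moore: "\<not> moore_graph_deg_diam2 V E r"
  proof -
    obtain T where "packing V E T" "card V \<le> r^2 * card T"
      by (rule large_packing_if_not_moore[OF assms(2,4) not_moore])
    then show ?thesis
      using k_tuple_domination_number_le_packing real_le_fraction_mult[of _ "card T" "card V" "r^2"]
        assms(4) by simp
  qed
  assume moore: "moore_graph_deg_diam2 V E r"
  then show gamma: "k_tuple_domination_number V E r = r^2"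
    using k_tuple_domination_number_moore assms(4) by simp
  have "card V = r^2 + 1" using moore by (simp add: moore_graph_deg_diam2_def)
  moreover have "real r ^ 2 + 1 > 0" by (simp add: add_nonneg_pos)
  ultimately show "real (k_tuple_domination_number V E r) = real r ^ 2 / (real r ^ 2 + 1) * real (card V)"
    unfolding gamma by (simp add: field_simps)
qed

end
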